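(* Let $\phi:\mathbb D\to\mathbb D$ be analytic with $\phi(0)=0$ and $|\phi'(0)|<1$. Then there exists $\rho>0$ such that for all integers $m,n\ge0$, $$|\widehat{\phi^n}(m)|\le\exp\Big(-\tfrac12\big[(1+\rho)n-m\big]\Big),$$ where $\widehat{\phi^n}(m)$ denotes the $m$-th Taylor coefficient of $\phi^n$ at $0$.
   Context: $\mathbb D$ is the open unit disk; $\phi^n$ is the $n$-th power (pointwise product) of $\phi$. *)

theory Defs
  imports "HOL-Complex_Analysis.Complex_Analysis"
begin

definition taylor_coeff :: "(complex \<Rightarrow> complex) \<Rightarrow> nat \<Rightarrow> complex" where
  "taylor_coeff f m = (deriv ^^ m) f 0 / fact m"

end

theory Submission
  imports Defs
begin

text \<open>By the Schwarz lemma, \<open>\<phi>\<close> is not a rotation and so maps the circle of radius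
  \<open>r = e\<^sup>-\<^sup>1\<^sup>/\<^sup>2\<close> strictly inside itself: \<open>|\<phi>| \<le> c < r\<close> there, by compactness. The Cauchy
  estimate on that circle bounds the \<open>m\<close>-th coefficient of \<open>\<phi>\<^sup>n\<close> by \<open>c\<^sup>n / r\<^sup>m\<close>, and writing
  \<open>c = e\<^sup>-\<^sup>(\<^sup>1\<^sup>+\<^sup>\<rho>\<^sup>)\<^sup>/\<^sup>2\<close> turns this into the claimed estimate.\<close>

lemma Schwarz_Lemma_strict:
  fixes f :: "complex \<Rightarrow> complex"
  assumes hol: "f holomorphic_on ball 0 1"
    and maps: "f ` ball 0 1 \<subseteq> ball 0 1"
    and "f 0 = 0"
    and deriv_lt: "norm (deriv f 0) < 1"
    and z: "norm z < 1" "z \<noteq> 0"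
  shows "norm (f z) < norm z"
proof (rule ccontr)
  have into_disc: "norm (f w) < 1" if "norm w < 1" for w
    using maps that by (metis image_subset_iff mem_ball_0)
  assume "\<not> norm (f z) < norm z"
  with Schwarz_Lemma(1)[OF hol \<open>f 0 = 0\<close> into_disc z(1)] have "norm (f z) = norm z"
    by simp
  then obtain \<alpha> where rotation: "\<forall>w. norm w < 1 \<longrightarrow> f w = \<alpha> * w" and "norm \<alpha> = 1"
    using Schwarz_Lemma(3)[OF hol \<open>f 0 = 0\<close> into_disc, of 0] z by auto
  have "eventually (\<lambda>w. f w = \<alpha> * w) (nhds 0)"
    using eventually_nhds_in_open[of "ball 0 1" 0] rotation
    by (auto elim!: eventually_mono)
  then have "deriv f 0 = \<alpha>"
    by (simp add: deriv_cong_ev[where g = "\<lambda>w. \<alpha> * w"])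
  with deriv_lt \<open>norm \<alpha> = 1\<close> show False by simp
qed

lemma compact_strict_bound_imp_uniform:
  fixes f :: "'a::topological_space \<Rightarrow> real"
  assumes "compact S" "continuous_on S f" "\<forall>x\<in>S. f x < b"
  shows "\<exists>c<b. \<forall>x\<in>S. f x \<le> c"
proof (cases "S = {}")
  case False
  then obtain x0 where "x0 \<in> S" "\<forall>x\<in>S. f x \<le> f x0"
    using continuous_attains_sup[OF assms(1) False assms(2)] by blast
  with assms(3) show ?thesis by blast
qed (auto intro: lt_ex)

lemma norm_taylor_coeff_le:
  assumes "f holomorphic_on ball 0 r" "continuous_on (cball 0 r) f" "0 < r"
    and "\<And>z. norm z = r \<Longrightarrow> norm (f z) \<le> M"
  shows "norm (taylor_coeff f m) \<le> M / r ^ m"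
proof -
  have "norm ((deriv ^^ m) f 0) \<le> fact m * M / r ^ m"
    using assms by (intro Cauchy_inequality) auto
  then show ?thesis
    unfolding taylor_coeff_def by (simp add: norm_divide field_simps)
qed

lemma Schwarz_uniform_bound_on_circle:
  fixes f :: "complex \<Rightarrow> complex"
  assumes "f holomorphic_on ball 0 1" "f ` ball 0 1 \<subseteq> ball 0 1" "f 0 = 0"
    and "norm (deriv f 0) < 1" "0 < r" "r < 1"
  shows "\<exists>c>0. c < r \<and> (\<forall>z. norm z = r \<longrightarrow> norm (f z) \<le> c)"
proof -
  have "continuous_on (sphere 0 r) f"
    using assms(1) \<open>r < 1\<close> by (auto intro: continuous_on_subset holomorphic_on_imp_continuous_on)
  moreover have "\<forall>z\<in>sphere 0 r. norm (f z) < r"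
    using Schwarz_Lemma_strict[OF assms(1-4)] assms(5,6) by auto
  ultimately obtain c0 where "c0 < r" and c0: "\<forall>z\<in>sphere 0 r. norm (f z) \<le> c0"
    using compact_strict_bound_imp_uniform[of "sphere 0 r" "\<lambda>z. norm (f z)"]
    by (fastforce intro: continuous_intros)
  with \<open>0 < r\<close> show ?thesis
    by (intro exI[of _ "max c0 (r/2)"]) force
qed

lemma norm_taylor_coeff_power_le:
  fixes f :: "complex \<Rightarrow> complex"
  assumes "f holomorphic_on ball 0 1" "0 < r" "r < 1"
    and "\<And>z. norm z = r \<Longrightarrow> norm (f z) \<le> c"
  shows "norm (taylor_coeff (\<lambda>z. f z ^ n) m) \<le> c ^ n / r ^ m"
proof (rule norm_taylor_coeff_le[OF _ _ \<open>0 < r\<close>])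
  have "cball 0 r \<subseteq> ball (0::complex) 1" using \<open>r < 1\<close> by auto
  then have "continuous_on (cball 0 r) f"
    using assms(1) by (auto intro: continuous_on_subset holomorphic_on_imp_continuous_on)
  then show "continuous_on (cball 0 r) (\<lambda>z. f z ^ n)"
    by (rule continuous_on_power)
  show "(\<lambda>z. f z ^ n) holomorphic_on ball 0 r"
    using assms(1) \<open>r < 1\<close> by (auto intro!: holomorphic_intros intro: holomorphic_on_subset)
  show "norm (f z ^ n) \<le> c ^ n" if "norm z = r" for z
    using assms(4)[OF that] by (simp add: norm_power power_mono)
qed

theorem mainTheorem10:
  fixes \<phi> :: "complex \<Rightarrow> complex"
  assumes "\<phi> holomorphic_on ball 0 1"
    and "\<phi> ` ball 0 1 \<subseteq> ball 0 1"
    and "\<phi> 0 = 0"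
    and "norm (deriv \<phi> 0) < 1"
  shows "\<exists>\<rho>>0. \<forall>m n :: nat.
           norm (taylor_coeff (\<lambda>z. \<phi> z ^ n) m)
             \<le> exp (- (1/2) * ((1 + \<rho>) * real n - real m))"
proof -
  define r :: real where "r = exp (-1/2)"
  have "0 < r" "r < 1" unfolding r_def by auto
  then obtain c where "0 < c" "c < r" and on_circle: "\<And>z. norm z = r \<Longrightarrow> norm (\<phi> z) \<le> c"
    using Schwarz_uniform_bound_on_circle[OF assms] by blast
  define \<rho> where "\<rho> = -2 * ln c - 1"
  have "ln c < ln r" using \<open>0 < c\<close> \<open>c < r\<close> by simp
  then have "\<rho> > 0" by (simp add: \<rho>_def r_def)
  have c_eq: "c = exp (-(1 + \<rho>)/2)" using \<open>0 < c\<close> by (simp add: \<rho>_def)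
  have "norm (taylor_coeff (\<lambda>z. \<phi> z ^ n) m) \<le> exp (- (1/2) * ((1 + \<rho>) * real n - real m))"
    for m n :: nat
  proof -
    have "norm (taylor_coeff (\<lambda>z. \<phi> z ^ n) m) \<le> c ^ n / r ^ m"
      using norm_taylor_coeff_power_le[OF assms(1) \<open>0 < r\<close> \<open>r < 1\<close> on_circle] .
    also have "\<dots> = exp (real n * (-(1 + \<rho>)/2) - real m * (-1/2))"
      unfolding exp_diff by (simp add: c_eq r_def flip: exp_of_nat_mult)
    also have "\<dots> = exp (- (1/2) * ((1 + \<rho>) * real n - real m))"
      by (simp add: field_simps)
    finally show ?thesis .
  qed
  with \<open>\<rho> > 0\<close> show ?thesis by blast
qed

end
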